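(* Fix nonnegative integers $s,t$, integers $\tilde\lambda_1\ge\tilde\lambda_2\ge\cdots\ge\tilde\lambda_s\ge0$, and nonnegative integers $\epsilon_1,\dots,\epsilon_t$. For an integer $k\ge\max(s,t)$ set $\tilde\lambda_j=0$ for $s<j\le k$, $\epsilon_j=0$ for $t<j\le k$, and $c_j=k+j-1-\epsilon_j$ for $1\le j\le k$. Then $$\det\bigl((c_i)_{\tilde\lambda_j+k-j}\bigr)_{1\le i,j\le k}=(-1)^{k(k-1)/2}\,\Delta(c)\cdot Q(k),$$ where $Q$ is a polynomial in $k$ (depending on the fixed data) of degree at most $2\sum_i\tilde\lambda_i$.
   Context: $(z)_\mu=z(z-1)\cdots(z-\mu+1)$ denotes the descending factorial (with $(z)_0=1$), and $\Delta(c)=\prod_{1\le i<j\le k}(c_j-c_i)$. *)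

theory Defs
  imports "Jordan_Normal_Form.Determinant" "HOL-Computational_Algebra.Polynomial"
begin

definition desc_fact :: "int \<Rightarrow> nat \<Rightarrow> int" where
  "desc_fact z mu = (\<Prod>i<mu. z - int i)"

text \<open>Extension by zero of a 1-indexed sequence f_1..f_n to all indices j > n.\<close>
definition ext0 :: "nat \<Rightarrow> (nat \<Rightarrow> nat) \<Rightarrow> nat \<Rightarrow> nat" where
  "ext0 n f j = (if j \<le> n then f j else 0)"

definition cseq :: "nat \<Rightarrow> nat \<Rightarrow> (nat \<Rightarrow> nat) \<Rightarrow> nat \<Rightarrow> int" where
  "cseq k t eps j = int k + int j - 1 - int (ext0 t eps j)"

definition vdm :: "nat \<Rightarrow> (nat \<Rightarrow> int) \<Rightarrow> int" where
  "vdm k c = (\<Prod>j\<in>{1..k}. \<Prod>i\<in>{1..<j}. c j - c i)"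

end

theory Submission
  imports Defs "HOL-Computational_Algebra.Formal_Power_Series"
begin

(* Let L = max s t and n = k - L. Reversing the columns and moving the last n rows to the top
   turns the matrix into (falling_fact x_i e_j) with x_i = u + i and e_j = j for i, j < n, where
   u = k + L. The Vandermonde identity
     falling_fact x e = sum_r (e choose r) * falling_fact (x - u) r * falling_fact u (e - r)
   factors this matrix as Y * W with Y block lower and W block upper triangular, so its
   determinant is prod_{q<n} q! * prod_i falling_fact (c_i - k - L) n times an L x L determinant.
   The entries of the latter are sums over r of falling_fact (c_i - k) r * p_{j,r}(k) with
   polynomials p_{j,r} of degree at most 2 (mu_j - r), mu_j = lam_{L-j} + j; by multilinearity
   in the columns only injective choices of r survive, giving a polynomial in k of degree at most
   2 sum_j (mu_j - j) = 2 |lam|. The factors pulled out, together with the sign of the row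
   rotation, make up Delta(c) divided by the Vandermonde product of c_1, ..., c_L, which does not
   depend on k. *)

definition falling_fact :: "'a::comm_ring_1 \<Rightarrow> nat \<Rightarrow> 'a" where
  "falling_fact x n = (\<Prod>i<n. x - of_nat i)"

lemma falling_fact_0 [simp]: "falling_fact x 0 = 1"
  by (simp add: falling_fact_def)

lemma of_int_falling_fact: "of_int (falling_fact z n) = falling_fact (of_int z) n"
  unfolding falling_fact_def by (simp add: of_int_prod)

lemma of_int_desc_fact: "of_int (desc_fact z n) = falling_fact (of_int z) n"
  unfolding desc_fact_def falling_fact_def by (simp add: of_int_prod)

lemma falling_fact_add: "falling_fact x (m + n) = falling_fact x m * falling_fact (x - of_nat m) n"
  by (induction n) (simp_all add: falling_fact_def algebra_simps)

lemma falling_fact_of_nat_eq_0: "i < n \<Longrightarrow> falling_fact (of_nat i) n = 0"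
  unfolding falling_fact_def by (rule prod_zero) auto

lemma falling_fact_gbinomial: "falling_fact (x :: 'a::field_char_0) n = fact n * (x gchoose n)"
  unfolding gbinomial_mult_fact falling_fact_def by (simp add: atLeast0LessThan)

lemma falling_fact_of_nat_self: "falling_fact (of_nat n :: 'a::field_char_0) n = fact n"
  by (simp add: falling_fact_gbinomial binomial_gbinomial[symmetric])

lemma of_nat_binomial_falling_fact:
  "(of_nat (m choose n) :: 'a::field_char_0) = falling_fact (of_nat m) n / fact n"
  by (simp add: falling_fact_gbinomial binomial_gbinomial)

lemma falling_fact_Vandermonde:
  fixes x y :: "'a::field_char_0"
  shows "falling_fact (x + y) n =
    (\<Sum>r\<le>n. of_nat (n choose r) * falling_fact x r * falling_fact y (n - r))"
proof -
  have "falling_fact (x + y) n = (\<Sum>r\<le>n. fact n * ((x gchoose r) * (y gchoose (n - r))))"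
    unfolding falling_fact_gbinomial gbinomial_Vandermonde[symmetric]
    by (simp add: atMost_atLeast0 sum_distrib_left)
  also have "\<dots> = (\<Sum>r\<le>n. of_nat (n choose r) * falling_fact x r * falling_fact y (n - r))"
  proof (rule sum.cong[OF refl])
    fix r assume "r \<in> {..n}"
    then have "of_nat (fact r * fact (n - r) * (n choose r)) = (of_nat (fact n) :: 'a)"
      using binomial_fact_lemma[of r n] by simp
    then have "(fact n :: 'a) = of_nat (n choose r) * fact r * fact (n - r)"
      by (simp only: of_nat_mult of_nat_fact mult_ac)
    then show "fact n * ((x gchoose r) * (y gchoose (n - r))) =
        of_nat (n choose r) * falling_fact x r * falling_fact y (n - r)"
      by (simp add: falling_fact_gbinomial mult_ac)
  qed
  finally show ?thesis .
qed

lemma poly_falling_fact: "poly (falling_fact p n) x = falling_fact (poly p x) n"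
  unfolding falling_fact_def by (simp add: poly_prod)

lemma degree_falling_fact_le: "degree (falling_fact (p :: 'a::field poly) n) \<le> n * degree p"
proof -
  have "degree (falling_fact p n) \<le> (\<Sum>i<n. degree (p - of_nat i))"
    unfolding falling_fact_def using degree_prod_sum_le[of "{..<n}"] by (simp add: o_def)
  also have "\<dots> \<le> (\<Sum>i<n. degree p)"
    by (intro sum_mono) (simp add: degree_diff_le)
  finally show ?thesis by simp
qed

lemma det_mat_col_Leibniz:
  "det (mat n n h) = (\<Sum>p | p permutes {0..<n}. signof p * (\<Prod>j<n. h (p j, j)))"
proof -
  have "\<And>p j. p permutes {0..<n} \<Longrightarrow> j < n \<Longrightarrow> p j < n"
    by (auto dest: permutes_in_image)
  then show ?thesis
    by (subst det_col[of _ n]) (auto intro!: sum.cong prod.cong)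
qed

lemma det_scale_rows:
  "det (mat n n (\<lambda>(i, j). d i * h i j)) = (\<Prod>i<n. d i) * det (mat n n (\<lambda>(i, j). h i j))"
proof -
  have "(\<Prod>j<n. d (p j) * h (p j) j) = (\<Prod>i<n. d i) * (\<Prod>j<n. h (p j) j)"
    if "p permutes {0..<n}" for p
    using prod.permute[OF that, of d] by (simp add: prod.distrib atLeast0LessThan comp_def)
  then show ?thesis
    unfolding det_mat_col_Leibniz sum_distrib_left by (auto intro!: sum.cong)
qed

lemma det_mat_sum_cols:
  fixes Z :: "nat \<Rightarrow> nat \<Rightarrow> 'a::comm_ring_1"
  assumes R: "finite R"
  shows "det (mat n n (\<lambda>(i, j). \<Sum>r\<in>R. Z i r * g r j)) =
    (\<Sum>f \<in> Pi\<^sub>E {..<n} (\<lambda>_. R). (\<Prod>j<n. g (f j) j) * det (mat n n (\<lambda>(i, j). Z i (f j))))"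
proof -
  let ?P = "{p. p permutes {0..<n}}"
  have "det (mat n n (\<lambda>(i, j). \<Sum>r\<in>R. Z i r * g r j)) =
      (\<Sum>p \<in> ?P. signof p * (\<Sum>f \<in> Pi\<^sub>E {..<n} (\<lambda>_. R). \<Prod>j<n. Z (p j) (f j) * g (f j) j))"
    unfolding det_mat_col_Leibniz by (simp add: prod_sum_PiE R)
  also have "\<dots> = (\<Sum>f \<in> Pi\<^sub>E {..<n} (\<lambda>_. R). \<Sum>p \<in> ?P.
      (\<Prod>j<n. g (f j) j) * (signof p * (\<Prod>j<n. Z (p j) (f j))))"
    by (subst sum.swap) (simp add: sum_distrib_left prod.distrib mult_ac)
  also have "\<dots> = (\<Sum>f \<in> Pi\<^sub>E {..<n} (\<lambda>_. R). (\<Prod>j<n. g (f j) j) * det (mat n n (\<lambda>(i, j). Z i (f j))))"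
    unfolding det_mat_col_Leibniz by (simp add: sum_distrib_left)
  finally show ?thesis .
qed

lemma det_mat_lower_triangular:
  assumes "\<And>i j. i < j \<Longrightarrow> j < n \<Longrightarrow> h (i, j) = 0"
  shows "det (mat n n h) = (\<Prod>i<n. h (i, i))"
  using det_lower_triangular[of n "mat n n h"] assms by (simp add: prod_list_diag_prod atLeast0LessThan)

lemma det_mat_upper_triangular:
  assumes "\<And>i j. j < i \<Longrightarrow> i < n \<Longrightarrow> h (i, j) = 0"
  shows "det (mat n n h) = (\<Prod>i<n. h (i, i))"
  using det_upper_triangular[of "mat n n h" n] assms
  by (simp add: upper_triangular_def prod_list_diag_prod atLeast0LessThan)

lemma det_reverse_initial_cols:
  assumes A: "A \<in> carrier_mat n n" and "p \<le> n"
  shows "det (mat n n (\<lambda>(i, j). A $$ (i, if j < p then p - 1 - j else j))) =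
    (-1) ^ (p * (p - 1) div 2) * det A"
  using \<open>p \<le> n\<close>
proof (induction p)
  case 0
  have "mat n n (\<lambda>(i, j). A $$ (i, if j < 0 then 0 - 1 - j else j)) = A"
    using A by (intro eq_matI) auto
  then show ?case by simp
next
  case (Suc p)
  define Ap where "Ap = mat n n (\<lambda>(i, j). A $$ (i, if j < p then p - 1 - j else j))"
  have "det Ap = (-1) ^ (p * 1) * det (mat n n (\<lambda>(i, j).
      Ap $$ (i, if j < 1 then j + p else if j < p + 1 then j - 1 else j)))"
    by (rule det_swap_initial_cols) (use Suc.prems in \<open>auto simp: Ap_def\<close>)
  also have "mat n n (\<lambda>(i, j). Ap $$ (i, if j < 1 then j + p else if j < p + 1 then j - 1 else j)) =
      mat n n (\<lambda>(i, j). A $$ (i, if j < Suc p then Suc p - 1 - j else j))"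
    using Suc.prems unfolding Ap_def by (intro eq_matI) auto
  finally have "det (mat n n (\<lambda>(i, j). A $$ (i, if j < Suc p then Suc p - 1 - j else j))) =
      (-1) ^ p * ((-1) ^ (p * (p - 1) div 2) * det A)"
    using Suc unfolding Ap_def by simp
  moreover have "p + p * (p - 1) div 2 = Suc p * (Suc p - 1) div 2"
    by (cases p) simp_all
  ultimately show ?case
    by (metis (no_types) mult.assoc power_add)
qed

lemma det_reverse_cols:
  assumes "A \<in> carrier_mat n n"
  shows "det (mat n n (\<lambda>(i, j). A $$ (i, n - 1 - j))) = (-1) ^ (n * (n - 1) div 2) * det A"
proof -
  have "mat n n (\<lambda>(i, j). A $$ (i, n - 1 - j)) =
      mat n n (\<lambda>(i, j). A $$ (i, if j < n then n - 1 - j else j))"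
    by (intro eq_matI) auto
  then show ?thesis
    using det_reverse_initial_cols[OF assms order.refl] by simp
qed

lemma det_mult_four_block_triangular:
  fixes Y1 :: "'a::field mat"
  assumes Y1: "Y1 \<in> carrier_mat n n" and Y3: "Y3 \<in> carrier_mat L n" and Y4: "Y4 \<in> carrier_mat L B"
    and W1: "W1 \<in> carrier_mat n n" and W2: "W2 \<in> carrier_mat n L" and W4: "W4 \<in> carrier_mat B L"
    and "det W1 \<noteq> 0"
  shows "det (four_block_mat Y1 (0\<^sub>m n B) Y3 Y4 * four_block_mat W1 W2 (0\<^sub>m B n) W4) =
    det Y1 * det W1 * det (Y4 * W4)"
proof -
  obtain V where V: "V \<in> carrier_mat n n" "W1 * V = 1\<^sub>m n"
    using det_non_zero_imp_unit[OF W1 \<open>det W1 \<noteq> 0\<close>, of undefined]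
    unfolding Units_def ring_mat_def by auto
  define X where "X = V * W2"
  have X: "X \<in> carrier_mat n L" unfolding X_def using V W2 by simp
  have "W1 * X = W2"
    unfolding X_def using V W1 W2 by (simp add: assoc_mult_mat[symmetric])
  then have W_factor: "four_block_mat W1 W2 (0\<^sub>m B n) W4 =
      four_block_mat W1 (0\<^sub>m n L) (0\<^sub>m B n) W4 * four_block_mat (1\<^sub>m n) X (0\<^sub>m L n) (1\<^sub>m L)"
    using W1 W2 W4 X
    by (subst mult_four_block_mat[where ?nr1.0 = n and ?n1.0 = n and ?n2.0 = L and ?nr2.0 = B
          and ?nc1.0 = n and ?nc2.0 = L]) auto
  have YD: "four_block_mat Y1 (0\<^sub>m n B) Y3 Y4 * four_block_mat W1 (0\<^sub>m n L) (0\<^sub>m B n) W4 =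
      four_block_mat (Y1 * W1) (0\<^sub>m n L) (Y3 * W1) (Y4 * W4)"
    using Y1 Y3 Y4 W1 W4
    by (subst mult_four_block_mat[where ?nr1.0 = n and ?n1.0 = n and ?n2.0 = B and ?nr2.0 = L
          and ?nc1.0 = n and ?nc2.0 = L]) auto
  have "det (four_block_mat (Y1 * W1) (0\<^sub>m n L) (Y3 * W1) (Y4 * W4)) = det (Y1 * W1) * det (Y4 * W4)"
    using Y1 Y3 Y4 W1 W4 by (intro det_four_block_mat_upper_right_zero) auto
  moreover have "det (four_block_mat (1\<^sub>m n) X (0\<^sub>m L n) (1\<^sub>m L)) = 1"
    using X by (subst det_four_block_mat_lower_left_zero[of _ n _ L]) auto
  ultimately show ?thesis
    unfolding W_factor using Y1 Y3 Y4 W1 W4 X det_mult[OF Y1 W1]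
    by (subst assoc_mult_mat[symmetric]) (auto simp: YD det_mult[of _ "n + L"])
qed

lemma det_mult_block_triangular:
  fixes Y W :: "'a::field mat"
  assumes Y: "Y \<in> carrier_mat (n + L) (n + B)" and W: "W \<in> carrier_mat (n + B) (n + L)"
    and Y0: "\<And>i r. i < n \<Longrightarrow> n \<le> r \<Longrightarrow> r < n + B \<Longrightarrow> Y $$ (i, r) = 0"
    and W0: "\<And>r j. j < n \<Longrightarrow> n \<le> r \<Longrightarrow> r < n + B \<Longrightarrow> W $$ (r, j) = 0"
    and W1_det: "det (mat n n (\<lambda>(r, j). W $$ (r, j))) \<noteq> 0"
  shows "det (Y * W) = det (mat n n (\<lambda>(i, r). Y $$ (i, r))) * det (mat n n (\<lambda>(r, j). W $$ (r, j))) *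
    det (mat L L (\<lambda>(i, j). \<Sum>r\<in>{n..<n + B}. Y $$ (n + i, r) * W $$ (r, n + j)))"
proof -
  obtain Y1 Y2 Y3 Y4 where sY: "split_block Y n n = (Y1, Y2, Y3, Y4)"
    by (cases "split_block Y n n") auto
  obtain W1 W2 W3 W4 where sW: "split_block W n n = (W1, W2, W3, W4)"
    by (cases "split_block W n n") auto
  note Ys = split_block[OF sY, of L B] and Ws = split_block[OF sW, of B L]
  have Y_blocks: "Y = four_block_mat Y1 (0\<^sub>m n B) Y3 Y4"
    using Ys Y Y0 sY by (auto simp: split_block_def Let_def intro!: eq_matI)
  have W_blocks: "W = four_block_mat W1 W2 (0\<^sub>m B n) W4"
    using Ws W W0 sW by (auto simp: split_block_def Let_def intro!: eq_matI)
  have "(Y4 * W4) $$ (i, j) = (\<Sum>r\<in>{n..<n + B}. Y $$ (n + i, r) * W $$ (r, n + j))"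
    if "i < L" "j < L" for i j
    using that sY sW Y W
    by (auto simp: split_block_def Let_def scalar_prod_def add.commute less_diff_conv2
        intro!: sum.reindex_bij_witness[of _ "\<lambda>r. r - n" "\<lambda>r. r + n"])
  then have Y4W4: "Y4 * W4 = mat L L (\<lambda>(i, j). \<Sum>r\<in>{n..<n + B}. Y $$ (n + i, r) * W $$ (r, n + j))"
    using Ys Ws Y W by (intro eq_matI) auto
  have "det (Y * W) = det Y1 * det W1 * det (Y4 * W4)"
    unfolding Y_blocks W_blocks using Ys Ws Y W W1_det sW
    by (intro det_mult_four_block_triangular) (auto simp: split_block_def Let_def case_prod_beta)
  then show ?thesis
    using sY sW Y W unfolding Y4W4 by (simp add: split_block_def Let_def case_prod_beta)
qed

lemma det_eq_0_if_vdm_eq_0: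
  fixes f :: "int \<Rightarrow> nat \<Rightarrow> 'a::comm_ring_1"
  assumes "vdm k c = 0"
  shows "det (mat k k (\<lambda>(i, j). f (c (i + 1)) j)) = 0"
proof -
  obtain j i where "j \<in> {1..k}" "i \<in> {1..<j}" "c i = c j"
    using assms unfolding vdm_def by (auto simp: prod_zero_iff)
  then show ?thesis
    by (intro det_identical_rows[of _ k "i - 1" "j - 1"] eq_vecI) auto
qed

lemma falling_fact_mat_Vandermonde_factor:
  fixes x :: "nat \<Rightarrow> 'a::field_char_0"
  assumes "\<And>j. j < K \<Longrightarrow> e j < N"
  shows "mat K K (\<lambda>(i, j). falling_fact (x i) (e j)) =
    mat K N (\<lambda>(i, r). falling_fact (x i - u) r) *
    mat N K (\<lambda>(r, j). of_nat (e j choose r) * falling_fact u (e j - r))"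
proof -
  have "falling_fact (x i) (e j) =
      (\<Sum>r<N. falling_fact (x i - u) r * (of_nat (e j choose r) * falling_fact u (e j - r)))"
    if "j < K" for i j
  proof -
    have "falling_fact (x i) (e j) = falling_fact ((x i - u) + u) (e j)"
      by simp
    also have "\<dots> = (\<Sum>r\<le>e j. falling_fact (x i - u) r * (of_nat (e j choose r) * falling_fact u (e j - r)))"
      unfolding falling_fact_Vandermonde by (simp add: mult_ac)
    also have "\<dots> = (\<Sum>r<N. falling_fact (x i - u) r * (of_nat (e j choose r) * falling_fact u (e j - r)))"
      using assms[OF that] by (intro sum.mono_neutral_left) auto
    finally show ?thesis .
  qed
  then show ?thesis
    by (intro eq_matI) (auto simp: scalar_prod_def atLeast0LessThan)
qed

lemma det_falling_fact_mat_reduce: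
  fixes u :: "'a::field_char_0" and b :: "nat \<Rightarrow> 'a" and \<mu> :: "nat \<Rightarrow> nat"
  shows "det (mat (n + L) (n + L) (\<lambda>(i, j). falling_fact (u + (if i < n then of_nat i else b (i - n)))
      (if j < n then j else n + \<mu> (j - n)))) =
    (\<Prod>i<n. fact i) * (\<Prod>i<L. falling_fact (b i) n) *
    det (mat L L (\<lambda>(i, j). \<Sum>q\<le>\<mu> j.
      falling_fact (b i - of_nat n) q * of_nat ((n + \<mu> j) choose (n + q)) * falling_fact u (\<mu> j - q)))"
proof -
  define B where "B = Suc (\<Sum>j<L. \<mu> j)"
  have \<mu>B: "\<mu> j < B" if "j < L" for j
    using member_le_sum[of j "{..<L}" \<mu>] that unfolding B_def by simp
  define x where "x i = u + (if i < n then of_nat i else b (i - n))" for i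
  define e where "e j = (if j < n then j else n + \<mu> (j - n))" for j
  define Y where "Y = mat (n + L) (n + B) (\<lambda>(i, r). falling_fact (x i - u) r)"
  define W where "W = mat (n + B) (n + L) (\<lambda>(r, j). of_nat (e j choose r) * falling_fact u (e j - r))"
  have W1: "det (mat n n (\<lambda>(r, j). W $$ (r, j))) = 1"
    by (subst det_mat_upper_triangular) (auto simp: W_def e_def)
  have Y1: "det (mat n n (\<lambda>(i, r). Y $$ (i, r))) = (\<Prod>i<n. fact i)"
    by (subst det_mat_lower_triangular)
      (auto simp: Y_def x_def falling_fact_of_nat_eq_0 falling_fact_of_nat_self intro!: prod.cong)
  have Y4W4: "(\<Sum>r\<in>{n..<n + B}. Y $$ (n + i, r) * W $$ (r, n + j)) = falling_fact (b i) n *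
      (\<Sum>q\<le>\<mu> j. falling_fact (b i - of_nat n) q * of_nat ((n + \<mu> j) choose (n + q)) *
        falling_fact u (\<mu> j - q))"
    if "i < L" "j < L" for i j
  proof -
    have "(\<Sum>r\<in>{n..<n + B}. Y $$ (n + i, r) * W $$ (r, n + j)) = (\<Sum>q<B. falling_fact (b i) (n + q) *
        (of_nat ((n + \<mu> j) choose (n + q)) * falling_fact u (\<mu> j - q)))"
      using that by (intro sum.reindex_bij_witness[of _ "\<lambda>q. n + q" "\<lambda>r. r - n"])
        (auto simp: Y_def W_def x_def e_def add.commute)
    also have "\<dots> = (\<Sum>q\<le>\<mu> j. falling_fact (b i) (n + q) *
        (of_nat ((n + \<mu> j) choose (n + q)) * falling_fact u (\<mu> j - q)))"
      using \<mu>B[OF that(2)] by (intro sum.mono_neutral_right) auto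
    finally show ?thesis
      by (simp add: falling_fact_add sum_distrib_left mult_ac)
  qed
  have "det (mat (n + L) (n + L) (\<lambda>(i, j). falling_fact (x i) (e j))) = det (Y * W)"
    unfolding Y_def W_def using \<mu>B
    by (subst falling_fact_mat_Vandermonde_factor[where N = "n + B"]) (auto simp: e_def)
  also have "\<dots> = det (mat n n (\<lambda>(i, r). Y $$ (i, r))) * det (mat n n (\<lambda>(r, j). W $$ (r, j))) *
      det (mat L L (\<lambda>(i, j). \<Sum>r\<in>{n..<n + B}. Y $$ (n + i, r) * W $$ (r, n + j)))"
  proof (rule det_mult_block_triangular)
    show "det (mat n n (\<lambda>(r, j). W $$ (r, j))) \<noteq> 0" using W1 by simp
  qed (auto simp: Y_def W_def x_def e_def falling_fact_of_nat_eq_0)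
  also have "mat L L (\<lambda>(i, j). \<Sum>r\<in>{n..<n + B}. Y $$ (n + i, r) * W $$ (r, n + j)) =
      mat L L (\<lambda>(i, j). falling_fact (b i) n * (\<Sum>q\<le>\<mu> j.
        falling_fact (b i - of_nat n) q * of_nat ((n + \<mu> j) choose (n + q)) * falling_fact u (\<mu> j - q)))"
    using Y4W4 by (intro eq_matI) auto
  finally show ?thesis
    unfolding x_def e_def Y1 W1 by (simp add: det_scale_rows)
qed

lemma sum_lessThan_le_Sum_nat:
  "finite A \<Longrightarrow> card A = n \<Longrightarrow> (\<Sum>j<n. j) \<le> \<Sum>(A :: nat set)"
proof (induction n arbitrary: A)
  case 0
  then show ?case by simp
next
  case (Suc n)
  have "A \<noteq> {}" using Suc.prems by auto
  define x where "x = Max A"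
  have "x \<in> A" and "A \<subseteq> {0..x}"
    using Suc.prems \<open>A \<noteq> {}\<close> unfolding x_def by auto
  then have "n \<le> x"
    using card_mono[of "{0..x}" A] Suc.prems by simp
  moreover have "(\<Sum>j<n. j) \<le> \<Sum>(A - {x})"
    using Suc \<open>x \<in> A\<close> by simp
  moreover have "\<Sum>A = x + \<Sum>(A - {x})"
    using Suc.prems \<open>x \<in> A\<close> by (simp add: sum.remove)
  ultimately show ?case by simp
qed

lemma sum_lessThan_le_sum_inj:
  assumes "inj_on f {..<n}"
  shows "(\<Sum>j<n. j) \<le> (\<Sum>j<n. f j :: nat)"
  using sum_lessThan_le_Sum_nat[of "f ` {..<n}" n] assms by (simp add: sum.reindex card_image)

lemma degree_prod_injective_choice_le:
  fixes g :: "nat \<Rightarrow> nat \<Rightarrow> 'a::field poly"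
  assumes "inj_on f {..<L}" and f_le: "\<And>j. j < L \<Longrightarrow> f j \<le> \<mu> j"
    and deg: "\<And>j. j < L \<Longrightarrow> degree (g j (f j)) \<le> w * (\<mu> j - f j)"
  shows "degree (\<Prod>j<L. g j (f j)) \<le> w * ((\<Sum>j<L. \<mu> j) - (\<Sum>j<L. j))"
proof -
  have "degree (\<Prod>j<L. g j (f j)) \<le> (\<Sum>j<L. degree (g j (f j)))"
    using degree_prod_sum_le[of "{..<L}" "\<lambda>j. g j (f j)"] by (simp add: o_def)
  also have "\<dots> \<le> (\<Sum>j<L. w * (\<mu> j - f j))"
    using deg by (intro sum_mono) simp
  also have "\<dots> = w * ((\<Sum>j<L. \<mu> j) - (\<Sum>j<L. f j))"
    using sum_subtractf_nat[of "{..<L}" f \<mu>] f_le by (simp add: sum_distrib_left[symmetric])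
  also have "\<dots> \<le> w * ((\<Sum>j<L. \<mu> j) - (\<Sum>j<L. j))"
    using sum_lessThan_le_sum_inj[OF assms(1)] by (intro mult_le_mono2 diff_le_mono2)
  finally show ?thesis .
qed

lemma det_mat_sum_poly_entries:
  fixes a :: "nat \<Rightarrow> nat \<Rightarrow> 'a::field" and g :: "nat \<Rightarrow> nat \<Rightarrow> 'a poly" and \<mu> :: "nat \<Rightarrow> nat"
  assumes deg: "\<And>j r. j < L \<Longrightarrow> r \<le> \<mu> j \<Longrightarrow> degree (g j r) \<le> w * (\<mu> j - r)"
  shows "\<exists>Q. degree Q \<le> w * ((\<Sum>j<L. \<mu> j) - (\<Sum>j<L. j)) \<and>
    (\<forall>x. det (mat L L (\<lambda>(i, j). \<Sum>r\<le>\<mu> j. a i r * poly (g j r) x)) = poly Q x)"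
proof -
  define B where "B = Suc (\<Sum>j<L. \<mu> j)"
  have \<mu>B: "\<mu> j < B" if "j < L" for j
    using member_le_sum[of j "{..<L}" \<mu>] that unfolding B_def by simp
  define g' where "g' j r = (if r \<le> \<mu> j then g j r else 0)" for j r
  define F where "F = Pi\<^sub>E {..<L} (\<lambda>_. {..<B})"
  define Z where "Z f = det (mat L L (\<lambda>(i, j). a i (f j)))" for f
  define Q where "Q = (\<Sum>f\<in>F. smult (Z f) (\<Prod>j<L. g' j (f j)))"
  have "det (mat L L (\<lambda>(i, j). \<Sum>r\<le>\<mu> j. a i r * poly (g j r) x)) = poly Q x" for x
  proof -
    have "(\<Sum>r\<le>\<mu> j. a i r * poly (g j r) x) = (\<Sum>r<B. a i r * poly (g' j r) x)"
      if "j < L" for i j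
      using \<mu>B[OF that] by (intro sum.mono_neutral_cong_left) (auto simp: g'_def)
    then have "mat L L (\<lambda>(i, j). \<Sum>r\<le>\<mu> j. a i r * poly (g j r) x) =
        mat L L (\<lambda>(i, j). \<Sum>r<B. a i r * poly (g' j r) x)"
      by (intro eq_matI) auto
    also have "det \<dots> = (\<Sum>f\<in>F. (\<Prod>j<L. poly (g' j (f j)) x) * Z f)"
      unfolding F_def Z_def by (rule det_mat_sum_cols) simp
    also have "\<dots> = poly Q x"
      unfolding Q_def by (simp add: poly_sum poly_prod mult.commute)
    finally show ?thesis .
  qed
  moreover have "degree (smult (Z f) (\<Prod>j<L. g' j (f j))) \<le> w * ((\<Sum>j<L. \<mu> j) - (\<Sum>j<L. j))"
    if "f \<in> F" for f
  proof (cases "Z f = 0 \<or> (\<exists>j<L. \<mu> j < f j)")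
    case True
    have "smult (Z f) (\<Prod>j<L. g' j (f j)) = 0"
    proof (cases "Z f = 0")
      case False
      with True obtain j where "j < L" "\<mu> j < f j" by blast
      then have "(\<Prod>j<L. g' j (f j)) = 0"
        by (intro prod_zero) (auto simp: g'_def intro!: bexI[of _ j])
      then show ?thesis by simp
    qed simp
    then show ?thesis by (metis degree_0 le0)
  next
    case False
    have f_le: "f j \<le> \<mu> j" if "j < L" for j
      using False that by (meson not_le)
    have "inj_on f {..<L}"
    proof (rule inj_onI, rule ccontr)
      fix i j assume "i \<in> {..<L}" "j \<in> {..<L}" "f i = f j" "i \<noteq> j"
      then have "Z f = 0"
        unfolding Z_def by (intro det_identical_columns[of _ L i j] eq_vecI) auto
      with False show False by simp
    qed
    have "degree (\<Prod>j<L. g' j (f j)) \<le> w * ((\<Sum>j<L. \<mu> j) - (\<Sum>j<L. j))"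
      using f_le deg by (intro degree_prod_injective_choice_le[OF \<open>inj_on f {..<L}\<close>]) (auto simp: g'_def)
    then show ?thesis
      using degree_smult_le order_trans by blast
  qed
  then have "degree Q \<le> w * ((\<Sum>j<L. \<mu> j) - (\<Sum>j<L. j))"
    unfolding Q_def by (intro degree_sum_le) (auto simp: F_def finite_PiE)
  ultimately show ?thesis by (intro exI[of _ Q] conjI allI)
qed

(* The L x L block left over by det_falling_fact_mat_reduce, with n = k - L and u = k + L. *)
definition reduced_mat :: "nat \<Rightarrow> (nat \<Rightarrow> 'a::field_char_0) \<Rightarrow> (nat \<Rightarrow> nat) \<Rightarrow> nat \<Rightarrow> 'a mat" where
  "reduced_mat L a \<mu> k = mat L L (\<lambda>(i, j). \<Sum>q\<le>\<mu> j.
     falling_fact (a i - of_nat k) q * of_nat ((k - L + \<mu> j) choose (k - L + q)) *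
     falling_fact (of_nat k + of_nat L) (\<mu> j - q))"

(* The coefficient of falling_fact a r in an entry of reduced_mat, as a polynomial in k: expand
   falling_fact (a - k) q by Vandermonde and write the binomial coefficient as
   falling_fact (k - L + m) (m - q) / fact (m - q). *)
definition reduced_coeff :: "nat \<Rightarrow> nat \<Rightarrow> nat \<Rightarrow> 'a::field_char_0 poly" where
  "reduced_coeff L m r = (\<Sum>q\<in>{r..m}. smult (of_nat (q choose r) / fact (m - q))
     (falling_fact [:0, -1:] (q - r) * falling_fact [:of_nat m - of_nat L, 1:] (m - q) *
      falling_fact [:of_nat L, 1:] (m - q)))"

lemma degree_reduced_coeff: "degree (reduced_coeff L m r) \<le> 2 * (m - r)"
  unfolding reduced_coeff_def
proof (rule degree_sum_le)
  fix q assume q: "q \<in> {r..m}"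
  let ?p = "falling_fact [:0, -1:] (q - r) * falling_fact [:of_nat m - of_nat L, 1:] (m - q) *
    falling_fact [:of_nat L, 1:] (m - q) :: 'a poly"
  have "degree (smult (of_nat (q choose r) / fact (m - q)) ?p) \<le> degree ?p"
    by (rule degree_smult_le)
  also have "\<dots> \<le> (q - r) + (m - q) + (m - q)"
    using degree_falling_fact_le[of "[:0, -1::'a:]" "q - r"]
      degree_falling_fact_le[of "[:of_nat m - of_nat L, 1::'a:]" "m - q"]
      degree_falling_fact_le[of "[:of_nat L, 1::'a:]" "m - q"]
    by (intro order.trans[OF degree_mult_le] add_mono order.trans[OF degree_mult_le]) simp_all
  also have "\<dots> \<le> 2 * (m - r)"
    using q by arith
  finally show "degree (smult (of_nat (q choose r) / fact (m - q)) ?p) \<le> 2 * (m - r)" .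
qed simp

lemma reduced_mat_entry:
  fixes a :: "'a::field_char_0"
  assumes "L \<le> k"
  shows "(\<Sum>q\<le>m. falling_fact (a - of_nat k) q * of_nat ((k - L + m) choose (k - L + q)) *
      falling_fact (of_nat k + of_nat L) (m - q)) =
    (\<Sum>r\<le>m. falling_fact a r * poly (reduced_coeff L m r) (of_nat k))"
proof -
  define K :: 'a where "K = of_nat k"
  define \<tau> where "\<tau> q r = of_nat (q choose r) / fact (m - q) * (falling_fact (- K) (q - r) *
      falling_fact (K - of_nat L + of_nat m) (m - q) * falling_fact (K + of_nat L) (m - q))" for q r
  have poly_coeff: "poly (reduced_coeff L m r) K = (\<Sum>q\<in>{r..m}. \<tau> q r)" for r
    unfolding reduced_coeff_def \<tau>_def by (simp add: poly_sum poly_falling_fact algebra_simps)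
  have "falling_fact (a - K) q * of_nat ((k - L + m) choose (k - L + q)) * falling_fact (K + of_nat L) (m - q) =
      (\<Sum>r\<le>q. falling_fact a r * \<tau> q r)" if "q \<le> m" for q
  proof -
    have "(k - L + m) choose (k - L + q) = (k - L + m) choose (m - q)"
      using that by (subst binomial_symmetric) (auto intro: arg_cong[where f = "\<lambda>x. _ choose x"])
    moreover have "(of_nat (k - L + m) :: 'a) = K - of_nat L + of_nat m"
      using assms unfolding K_def by (simp add: of_nat_diff)
    ultimately have binomial: "(of_nat ((k - L + m) choose (k - L + q)) :: 'a) =
        falling_fact (K - of_nat L + of_nat m) (m - q) / fact (m - q)"
      by (simp add: of_nat_binomial_falling_fact)
    have expand: "falling_fact (a - K) q =
        (\<Sum>r\<le>q. of_nat (q choose r) * falling_fact a r * falling_fact (- K) (q - r))"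
      using falling_fact_Vandermonde[of a "- K" q] by simp
    show ?thesis
      unfolding binomial expand \<tau>_def sum_distrib_right by (intro sum.cong) (simp_all add: field_simps)
  qed
  then have "(\<Sum>q\<le>m. falling_fact (a - K) q * of_nat ((k - L + m) choose (k - L + q)) *
      falling_fact (K + of_nat L) (m - q)) = (\<Sum>q\<le>m. \<Sum>r\<le>q. falling_fact a r * \<tau> q r)"
    by simp
  also have "\<dots> = (\<Sum>q\<le>m. \<Sum>r\<in>{r\<in>{..m}. r \<le> q}. falling_fact a r * \<tau> q r)"
    by (intro sum.cong) auto
  also have "\<dots> = (\<Sum>r\<le>m. \<Sum>q\<in>{q\<in>{..m}. r \<le> q}. falling_fact a r * \<tau> q r)"
    by (rule sum.swap_restrict) auto
  also have "\<dots> = (\<Sum>r\<le>m. \<Sum>q\<in>{r..m}. falling_fact a r * \<tau> q r)"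
    by (intro sum.cong) auto
  finally show ?thesis
    unfolding K_def[symmetric] poly_coeff by (simp add: sum_distrib_left)
qed

lemma det_reduced_mat_poly:
  "\<exists>Q. degree Q \<le> 2 * ((\<Sum>j<L. \<mu> j) - (\<Sum>j<L. j)) \<and>
    (\<forall>k \<ge> L. det (reduced_mat L a \<mu> k) = poly Q (of_nat k))"
proof -
  obtain Q where "degree Q \<le> 2 * ((\<Sum>j<L. \<mu> j) - (\<Sum>j<L. j))"
    and Q: "\<And>x. det (mat L L (\<lambda>(i, j). \<Sum>r\<le>\<mu> j. falling_fact (a i) r * poly (reduced_coeff L (\<mu> j) r) x)) = poly Q x"
    using det_mat_sum_poly_entries[of L \<mu> "\<lambda>j r. reduced_coeff L (\<mu> j) r" 2 "\<lambda>i r. falling_fact (a i) r"]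
      degree_reduced_coeff by blast
  moreover have "det (reduced_mat L a \<mu> k) = poly Q (of_nat k)" if "L \<le> k" for k
    unfolding reduced_mat_def Q[symmetric]
    by (intro arg_cong[where f = det] eq_matI) (auto simp: reduced_mat_entry[OF that])
  ultimately show ?thesis by blast
qed

lemma vdm_split:
  assumes "L \<le> k"
  shows "vdm k c = vdm L c * (\<Prod>j\<in>{L<..k}. \<Prod>i\<in>{1..L}. c j - c i) *
    (\<Prod>j\<in>{L<..k}. \<Prod>i\<in>{L<..<j}. c j - c i)"
proof -
  have inner: "(\<Prod>i\<in>{1..<j}. c j - c i) = (\<Prod>i\<in>{1..L}. c j - c i) * (\<Prod>i\<in>{L<..<j}. c j - c i)"
    if "j \<in> {L<..k}" for j
  proof -
    have "{1..<j} = {1..L} \<union> {L<..<j}" using that by auto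
    then show ?thesis by (simp only:) (rule prod.union_disjoint; auto)
  qed
  have "{1..k} = {1..L} \<union> {L<..k}" using assms by auto
  then have "vdm k c = vdm L c * (\<Prod>j\<in>{L<..k}. \<Prod>i\<in>{1..<j}. c j - c i)"
    unfolding vdm_def by (simp only:) (rule prod.union_disjoint; auto)
  then show ?thesis
    by (simp only: prod.cong[OF refl inner] prod.distrib mult.assoc)
qed

lemma prod_prod_diff_eq_prod_fact:
  "(\<Prod>j\<in>{L<..k}. \<Prod>i\<in>{L<..<j}. int j - int i) = (\<Prod>q<k - L. fact q)"
proof -
  have "(\<Prod>i\<in>{L<..<j}. int j - int i) = fact (j - L - 1)" if "L < j" for j
  proof -
    have "(\<Prod>i\<in>{L<..<j}. int j - int i) = (\<Prod>d\<in>{1..j - L - 1}. int d)"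
      using that by (intro prod.reindex_bij_witness[of _ "\<lambda>d. j - d" "\<lambda>i. j - i"]) auto
    then show ?thesis
      by (simp add: fact_prod)
  qed
  then have "(\<Prod>j\<in>{L<..k}. \<Prod>i\<in>{L<..<j}. int j - int i) = (\<Prod>j\<in>{L<..k}. fact (j - L - 1))"
    by (intro prod.cong) auto
  also have "\<dots> = (\<Prod>q<k - L. fact q)"
    by (intro prod.reindex_bij_witness[of _ "\<lambda>q. L + 1 + q" "\<lambda>j. j - L - 1"]) auto
  finally show ?thesis .
qed

lemma prod_shift_eq_falling_fact:
  "(\<Prod>j\<in>{L<..k}. int j - 1 - a) = (-1) ^ (k - L) * falling_fact (a - int L) (k - L)"
proof -
  have "(\<Prod>j\<in>{L<..k}. int j - 1 - a) = (\<Prod>q<k - L. (-1) * (a - int L - int q))"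
    by (intro prod.reindex_bij_witness[of _ "\<lambda>q. L + 1 + q" "\<lambda>j. j - L - 1"]) auto
  then show ?thesis
    unfolding prod.distrib falling_fact_def by simp
qed

lemma cseq_eq: "cseq k t eps j = int k + cseq 0 t eps j"
  by (simp add: cseq_def)

lemma vdm_cseq:
  assumes "t \<le> L" "L \<le> k"
  shows "vdm k (cseq k t eps) = vdm L (cseq L t eps) * (-1) ^ ((k - L) * L) *
    (\<Prod>i<L. falling_fact (cseq 0 t eps (i + 1) - int L) (k - L)) * (\<Prod>q<k - L. fact q)"
proof -
  define c where "c = cseq k t eps"
  have c_large: "c j = int k + int j - 1" if "L < j" for j
    using that assms unfolding c_def cseq_def ext0_def by auto
  have "vdm L c = vdm L (cseq L t eps)"
    unfolding c_def vdm_def cseq_def by simp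
  moreover have "(\<Prod>j\<in>{L<..k}. \<Prod>i\<in>{1..L}. c j - c i) =
      (-1) ^ ((k - L) * L) * (\<Prod>i<L. falling_fact (cseq 0 t eps (i + 1) - int L) (k - L))"
  proof -
    have "c j - c i = int j - 1 - cseq 0 t eps i" if "L < j" for i j
      using c_large[OF that] cseq_eq[of k t eps i] unfolding c_def by simp
    then have "(\<Prod>j\<in>{L<..k}. \<Prod>i\<in>{1..L}. c j - c i) =
        (\<Prod>i\<in>{1..L}. \<Prod>j\<in>{L<..k}. int j - 1 - cseq 0 t eps i)"
      by (subst prod.swap) (auto intro!: prod.cong)
    also have "\<dots> = (\<Prod>i<L. (-1) ^ (k - L) * falling_fact (cseq 0 t eps (i + 1) - int L) (k - L))"
      unfolding prod_shift_eq_falling_fact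
      by (intro prod.reindex_bij_witness[of _ "\<lambda>i. i + 1" "\<lambda>i. i - 1"]) auto
    finally show ?thesis
      by (simp add: prod.distrib flip: power_mult)
  qed
  moreover have "(\<Prod>j\<in>{L<..k}. \<Prod>i\<in>{L<..<j}. c j - c i) = (\<Prod>q<k - L. fact q)"
    using prod_prod_diff_eq_prod_fact[of L k] by (auto simp: c_large intro!: prod.cong)
  ultimately show ?thesis
    unfolding c_def[symmetric] vdm_split[OF assms(2), of c] by (simp add: mult.assoc)
qed

definition desc_fact_mat :: "nat \<Rightarrow> nat \<Rightarrow> (nat \<Rightarrow> nat) \<Rightarrow> (nat \<Rightarrow> nat) \<Rightarrow> nat \<Rightarrow> 'a::comm_ring_1 mat" where
  "desc_fact_mat s t lam eps k = mat k k (\<lambda>(i, j).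
     of_int (desc_fact (cseq k t eps (i + 1)) (ext0 s lam (j + 1) + k - (j + 1))))"

lemma det_desc_fact_mat_eq_0:
  assumes "vdm k (cseq k t eps) = 0"
  shows "det (desc_fact_mat s t lam eps k :: 'a::comm_ring_1 mat) = 0"
  using det_eq_0_if_vdm_eq_0[OF assms, of "\<lambda>z j. of_int (desc_fact z (ext0 s lam (j + 1) + k - (j + 1)))"]
  by (simp add: desc_fact_mat_def)

lemma det_desc_fact_mat_rearrange:
  assumes "max s t \<le> L"
  shows "det (desc_fact_mat s t lam eps (n + L) :: 'a::field_char_0 mat) =
    (-1) ^ ((n + L) * (n + L - 1) div 2) * (-1) ^ (n * L) *
    det (mat (n + L) (n + L) (\<lambda>(i, j).
      falling_fact (of_nat (n + L) + of_nat L +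
        (if i < n then of_nat i else of_int (cseq 0 t eps (i - n + 1)) - of_nat L))
      (if j < n then j else n + (ext0 s lam (L - (j - n)) + (j - n)))))"
proof -
  define k where "k = n + L"
  define A :: "'a mat" where "A = desc_fact_mat s t lam eps k"
  define A' where "A' = mat k k (\<lambda>(i, j). A $$ (i, k - 1 - j))"
  have entry: "A' $$ (if i < n then i + L else i - n, j) =
      falling_fact (of_nat (n + L) + of_nat L +
        (if i < n then of_nat i else of_int (cseq 0 t eps (i - n + 1)) - of_nat L))
      (if j < n then j else n + (ext0 s lam (L - (j - n)) + (j - n)))"
    if i: "i < n + L" and j: "j < n + L" for i j
  proof -
    have row: "(of_int (cseq k t eps ((if i < n then i + L else i - n) + 1)) :: 'a) =
        of_nat (n + L) + of_nat L + (if i < n then of_nat i else of_int (cseq 0 t eps (i - n + 1)) - of_nat L)"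
      using assms by (subst cseq_eq) (auto simp: k_def cseq_def ext0_def)
    have "k - 1 - j + 1 = n + L - j" and "\<not> j < n \<Longrightarrow> L - (j - n) = n + L - j"
      using j by (auto simp: k_def)
    then have col: "ext0 s lam (k - 1 - j + 1) + k - (k - 1 - j + 1) =
        (if j < n then j else n + (ext0 s lam (L - (j - n)) + (j - n)))"
      using assms by (auto simp: k_def ext0_def)
    show ?thesis
      using i j row col by (auto simp: A'_def A_def desc_fact_mat_def k_def of_int_desc_fact)
  qed
  have "A \<in> carrier_mat k k" unfolding A_def desc_fact_mat_def by simp
  then have "det A' = (-1) ^ (k * (k - 1) div 2) * det A"
    unfolding A'_def by (rule det_reverse_cols)
  then have "det A = (-1) ^ (k * (k - 1) div 2) * det A'"
    by (simp flip: power_add mult_2)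
  also have "det A' = (-1) ^ (n * L) *
      det (mat (n + L) (n + L) (\<lambda>(i, j). A' $$ (if i < n then i + L else i - n, j)))"
    by (rule det_swap_rows) (simp add: A'_def k_def)
  also have "mat (n + L) (n + L) (\<lambda>(i, j). A' $$ (if i < n then i + L else i - n, j)) =
    mat (n + L) (n + L) (\<lambda>(i, j).
      falling_fact (of_nat (n + L) + of_nat L +
        (if i < n then of_nat i else of_int (cseq 0 t eps (i - n + 1)) - of_nat L))
      (if j < n then j else n + (ext0 s lam (L - (j - n)) + (j - n))))"
    by (intro eq_matI) (simp_all add: entry)
  finally show ?thesis
    unfolding A_def k_def by (simp add: mult_ac)
qed

(* Multiplied out by the Vandermonde product of c_1, ..., c_L, which may vanish. *)
lemma det_desc_fact_mat_factor:
  assumes "max s t \<le> L" "L \<le> k"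
  shows "of_int (vdm L (cseq L t eps)) * det (desc_fact_mat s t lam eps k :: 'a::field_char_0 mat) =
    (-1) ^ (k * (k - 1) div 2) * of_int (vdm k (cseq k t eps)) *
    det (reduced_mat L (\<lambda>i. of_int (cseq 0 t eps (i + 1))) (\<lambda>j. ext0 s lam (L - j) + j) k)"
proof -
  obtain n where k: "k = n + L"
    using assms(2) le_Suc_ex by (metis add.commute)
  define \<mu> where "\<mu> j = ext0 s lam (L - j) + j" for j
  define b :: "nat \<Rightarrow> 'a" where "b i = of_int (cseq 0 t eps (i + 1)) - of_nat L" for i
  define R :: "'a mat" where "R = reduced_mat L (\<lambda>i. of_int (cseq 0 t eps (i + 1))) \<mu> k"
  have "det (desc_fact_mat s t lam eps k :: 'a mat) =
    (-1) ^ (k * (k - 1) div 2) * (-1) ^ (n * L) * det (mat (n + L) (n + L) (\<lambda>(i, j).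
      falling_fact (of_nat (n + L) + of_nat L + (if i < n then of_nat i else b (i - n)))
        (if j < n then j else n + \<mu> (j - n))))"
    unfolding k b_def \<mu>_def by (rule det_desc_fact_mat_rearrange[OF assms(1)])
  also have "R = mat L L (\<lambda>(i, j). \<Sum>q\<le>\<mu> j. falling_fact (b i - of_nat n) q *
      of_nat ((n + \<mu> j) choose (n + q)) * falling_fact (of_nat (n + L) + of_nat L) (\<mu> j - q))"
    unfolding R_def reduced_mat_def b_def k by (simp add: algebra_simps)
  then have "det (mat (n + L) (n + L) (\<lambda>(i, j).
      falling_fact (of_nat (n + L) + of_nat L + (if i < n then of_nat i else b (i - n)))
        (if j < n then j else n + \<mu> (j - n)))) =
    (\<Prod>q<n. fact q) * (\<Prod>i<L. falling_fact (b i) n) * det R"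
    by (simp only: det_falling_fact_mat_reduce)
  also have "(\<Prod>i<L. falling_fact (b i) n) =
      of_int (\<Prod>i<L. falling_fact (cseq 0 t eps (i + 1) - int L) n)"
    by (simp add: b_def of_int_prod of_int_falling_fact)
  finally show ?thesis
    using vdm_cseq[of t L k eps] assms unfolding R_def \<mu>_def k by (simp add: mult_ac)
qed

lemma sum_ext0_reverse:
  assumes "s \<le> L"
  shows "(\<Sum>j<L. ext0 s f (L - j)) = (\<Sum>i = 1..s. f i)"
proof -
  have "(\<Sum>j<L. ext0 s f (L - j)) = (\<Sum>i = 1..L. ext0 s f i)"
    by (intro sum.reindex_bij_witness[of _ "\<lambda>i. L - i" "\<lambda>j. L - j"]) auto
  also have "\<dots> = (\<Sum>i = 1..s. f i)"
    using assms by (intro sum.mono_neutral_cong_right) (auto simp: ext0_def)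
  finally show ?thesis .
qed

theorem theorem4:
  fixes s t :: nat and lam eps :: "nat \<Rightarrow> nat"
  assumes "\<forall>i j. 1 \<le> i \<longrightarrow> i \<le> j \<longrightarrow> j \<le> s \<longrightarrow> lam j \<le> lam i"
  shows "\<exists>Q :: rat poly. degree Q \<le> 2 * (\<Sum>i=1..s. lam i) \<and>
    (\<forall>k \<ge> max s t.
       det (mat k k (\<lambda>(i, j). of_int (desc_fact (cseq k t eps (i + 1))
                                   (ext0 s lam (j + 1) + k - (j + 1)))) :: rat mat)
       = (-1) ^ (k * (k - 1) div 2) * of_int (vdm k (cseq k t eps)) * poly Q (of_nat k))"
proof -
  define L where "L = max s t"
  define D where "D = vdm L (cseq L t eps)"
  define a :: "nat \<Rightarrow> rat" where "a i = of_int (cseq 0 t eps (i + 1))" for i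
  define \<mu> where "\<mu> j = ext0 s lam (L - j) + j" for j
  have "(\<Sum>j<L. \<mu> j) - (\<Sum>j<L. j) = (\<Sum>i = 1..s. lam i)"
    using sum_ext0_reverse[of s L lam] unfolding \<mu>_def L_def by (simp add: sum.distrib)
  then obtain Q0 where deg: "degree Q0 \<le> 2 * (\<Sum>i = 1..s. lam i)"
    and Q0: "\<And>k. L \<le> k \<Longrightarrow> det (reduced_mat L a \<mu> k) = poly Q0 (of_nat k)"
    using det_reduced_mat_poly[where L = L and \<mu> = \<mu> and a = a] by auto
  have "det (desc_fact_mat s t lam eps k :: rat mat) =
      (-1) ^ (k * (k - 1) div 2) * of_int (vdm k (cseq k t eps)) * poly (smult (1 / of_int D) Q0) (of_nat k)"
    if "max s t \<le> k" for k
  proof (cases "vdm k (cseq k t eps) = 0")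
    case True
    then show ?thesis by (simp add: det_desc_fact_mat_eq_0)
  next
    case False
    then have "D \<noteq> 0"
      using vdm_cseq[of t L k eps] that unfolding D_def L_def by auto
    then show ?thesis
      using det_desc_fact_mat_factor[of s t L k eps lam, where 'a = rat] Q0[of k] that
      unfolding D_def L_def a_def \<mu>_def by (simp add: field_simps)
  qed
  moreover have "degree (smult (1 / of_int D) Q0) \<le> 2 * (\<Sum>i = 1..s. lam i)"
    using deg degree_smult_le order_trans by blast
  ultimately show ?thesis
    unfolding desc_fact_mat_def by blast
qed

end
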